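(* Let $d\geq 2$, $1\leq k\leq d-1$, let $A\subset\mathbb{R}^d$ have positive reach and let $a\in T_k(A)$. Then there exists $\delta>0$ such that the mapping $\psi_k^A$ is Lipschitz on $T_k(A)\cap B(a,\delta)$ (with respect to the metric $\rho_k$ on $G(d,k)$).
   Context: A set $A\subset\mathbb{R}^d$ has positive reach if there is $\varepsilon>0$ such that every $x$ with $\mathrm{dist}(x,A)<\varepsilon$ has a unique nearest point in $A$. $\operatorname{Tan}(A,x)$ is the tangent cone of $A$ at $x\in A$ ($u\in\operatorname{Tan}(A,x)$ iff $u=0$ or $r_i(x_i-x)\to u$ for some $x\neq x_i\in A$, $x_i\to x$, $r_i>0$); $\widetilde{\operatorname{Tan}}(A,x)=\operatorname{span}\operatorname{Tan}(A,x)$. $T_k(A)=\{x\in A:\dim\widetilde{\operatorname{Tan}}(A,x)=k\}$. $G(d,k)$ is the Grassmannian of $k$-dimensional linear subspaces of $\mathbb{R}^d$, with the metric $\rho_k(U,V)=\max\big(\sup_{u\in U,|u|=1}\mathrm{dist}(u,V),\sup_{v\in V,|v|=1}\mathrm{dist}(v,U)\big)$ (equivalently $\|\pi_U-\pi_V\|$ for orthogonal projections). $\psi_k^A:T_k(A)\to G(d,k)$ is $\psi_k^A(x)=\widetilde{\operatorname{Tan}}(A,x)$. *)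

theory Defs
  imports "HOL-Analysis.Analysis"
begin

definition positive_reach :: "'a::euclidean_space set \<Rightarrow> bool" where
  "positive_reach A \<longleftrightarrow> (\<exists>\<epsilon>>0. \<forall>x. infdist x A < \<epsilon> \<longrightarrow>
      (\<exists>!p. p \<in> A \<and> dist x p = infdist x A))"

definition Tan :: "'a::euclidean_space set \<Rightarrow> 'a \<Rightarrow> 'a set" where
  "Tan A x = {u. u = 0 \<or> (\<exists>xs r. (\<forall>i. xs i \<in> A \<and> xs i \<noteq> x \<and> r i > 0) \<and>
      xs \<longlonglongrightarrow> x \<and> (\<lambda>i. r i *\<^sub>R (xs i - x)) \<longlonglongrightarrow> u)}"

definition Tan_span :: "'a::euclidean_space set \<Rightarrow> 'a \<Rightarrow> 'a set" where
  "Tan_span A x = span (Tan A x)"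

definition T_k :: "'a::euclidean_space set \<Rightarrow> nat \<Rightarrow> 'a set" where
  "T_k A k = {x \<in> A. dim (Tan_span A x) = k}"

definition grass_dist :: "'a::euclidean_space set \<Rightarrow> 'a set \<Rightarrow> real" where
  "grass_dist U V = max (SUP u\<in>{u\<in>U. norm u = 1}. infdist u V)
                        (SUP v\<in>{v\<in>V. norm v = 1}. infdist v U)"

definition psi :: "'a::euclidean_space set \<Rightarrow> 'a \<Rightarrow> 'a set" where
  "psi A x = Tan_span A x"

end

(*
  A set A of reach at least e has normal balls of a uniform radius t < e: if y is in A and v is a
  unit vector orthogonal to Tan(A,y), the open ball of radius t centred at y + t v misses A.  This
  rests on Federer's observation that a proximal normal of a set of positive reach can be extended
  up to the reach, proved with Brouwer's fixed point theorem.  Consequently every z in A satisfies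
  |v . (z - y)| <= |z - y|^2 / (2 t), and A is almost convex: the points of a chord of length l
  lie within O(l^2) of A.

  Fix a basis B of span Tan(A,a) inside Tan(A,a).  By almost convexity, every direction b in B is
  realised near a at every point x of A and at every small scale s by a point w of A with
  (w - x)/s close to b/|b|.  For x, y in T_k(A) at distance r, these secants (taken at scale r) are
  within O(r) of both span Tan(A,x) and span Tan(A,y), and they form a near-basis of span Tan(A,x)
  because dim Tan(A,x) = k = card B.  Hence every unit vector of span Tan(A,x) is within O(r) of
  span Tan(A,y), and vice versa.
*)
theory Submission
  imports Defs
begin

section \<open>Nearest points and proximal normals\<close>

lemma norm_sgn_diff_le:
  fixes u w :: "'a::real_normed_vector"
  assumes "w \<noteq> 0"
  shows "norm (sgn u - sgn w) \<le> 2 * norm (u - w) / norm w"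
proof (cases "u = 0")
  case True
  then show ?thesis using assms by (simp add: norm_sgn)
next
  case False
  have split: "sgn u - sgn w = (inverse (norm u) - inverse (norm w)) *\<^sub>R u + inverse (norm w) *\<^sub>R (u - w)"
    by (simp add: sgn_div_norm algebra_simps)
  have "norm ((inverse (norm u) - inverse (norm w)) *\<^sub>R u) = \<bar>norm w - norm u\<bar> / norm w"
    using False assms by (simp add: field_simps abs_minus_commute)
  also have "\<dots> \<le> norm (u - w) / norm w"
    using norm_triangle_ineq3[of w u] by (simp add: norm_minus_commute divide_right_mono)
  finally have "norm ((inverse (norm u) - inverse (norm w)) *\<^sub>R u) \<le> norm (u - w) / norm w" .
  moreover have "norm (inverse (norm w) *\<^sub>R (u - w)) = norm (u - w) / norm w"
    by (simp add: divide_inverse mult.commute)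
  moreover have "norm (sgn u - sgn w)
      \<le> norm ((inverse (norm u) - inverse (norm w)) *\<^sub>R u) + norm (inverse (norm w) *\<^sub>R (u - w))"
    unfolding split by (rule norm_triangle_ineq)
  ultimately show ?thesis by linarith
qed

lemma dist_closest_point_eq_infdist:
  fixes S :: "'a::euclidean_space set"
  assumes "closed S" "S \<noteq> {}"
  shows "dist x (closest_point S x) = infdist x S"
proof (rule antisym)
  show "dist x (closest_point S x) \<le> infdist x S"
    unfolding infdist_notempty[OF assms(2)] using assms closest_point_le
    by (intro cINF_greatest) auto
  show "infdist x S \<le> dist x (closest_point S x)"
    using assms by (intro infdist_le closest_point_in_set)
qed

lemma ball_infdist_disjoint: "ball x (infdist x S) \<inter> S = {}"
  unfolding disjoint_iff mem_ball by (meson infdist_le not_le)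

lemma closest_point_shift_sq_le:
  fixes S :: "'a::euclidean_space set" and t :: real
  assumes "closed S" "S \<noteq> {}" "x \<in> S" "norm v = 1"
  defines "w \<equiv> closest_point S (x + t *\<^sub>R v) - x"
  shows "(norm w)\<^sup>2 \<le> 2 * t * (v \<bullet> w)"
proof -
  have "dist (x + t *\<^sub>R v) (closest_point S (x + t *\<^sub>R v)) \<le> dist (x + t *\<^sub>R v) x"
    using closest_point_le assms by blast
  then have "norm (t *\<^sub>R v - w) \<le> \<bar>t\<bar>"
    using assms(4) by (simp add: w_def dist_norm algebra_simps)
  then have "(norm (t *\<^sub>R v - w))\<^sup>2 \<le> \<bar>t\<bar>\<^sup>2"
    by (intro power_mono) auto
  moreover have "t * (v \<bullet> w) = (t\<^sup>2 + (norm w)\<^sup>2 - (norm (t *\<^sub>R v - w))\<^sup>2) / 2"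
    using dot_norm_neg[of "t *\<^sub>R v" w] assms(4) by (simp add: power_mult_distrib)
  ultimately show ?thesis by simp
qed

definition proximal_normal :: "'a::euclidean_space set \<Rightarrow> 'a \<Rightarrow> 'a \<Rightarrow> real \<Rightarrow> bool" where
  "proximal_normal S p n t \<longleftrightarrow> ball (p + t *\<^sub>R n) t \<inter> S = {}"

lemma proximal_normal_iff: "proximal_normal S p n t \<longleftrightarrow> (\<forall>z\<in>S. t \<le> dist (p + t *\<^sub>R n) z)"
  unfolding proximal_normal_def disjoint_iff mem_ball by (meson not_le)

lemma proximal_normal_mono:
  assumes "proximal_normal S p n t" "norm n = 1" "0 \<le> s" "s \<le> t"
  shows "proximal_normal S p n s"
proof -
  have "dist (p + t *\<^sub>R n) (p + s *\<^sub>R n) = t - s"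
    using assms by (simp add: dist_norm flip: scaleR_diff_left)
  then have tri: "dist (p + t *\<^sub>R n) y \<le> (t - s) + dist (p + s *\<^sub>R n) y" for y
    by (metis dist_triangle)
  have "ball (p + s *\<^sub>R n) s \<subseteq> ball (p + t *\<^sub>R n) t"
  proof
    fix y assume "y \<in> ball (p + s *\<^sub>R n) s"
    with tri[of y] show "y \<in> ball (p + t *\<^sub>R n) t" by simp
  qed
  then show ?thesis using assms(1) unfolding proximal_normal_def by blast
qed

lemma proximal_normal_inner_le:
  assumes "proximal_normal S p n t" "norm n = 1" "0 < t" "z \<in> S"
  shows "n \<bullet> (z - p) \<le> (norm (z - p))\<^sup>2 / (2 * t)"
proof -
  have "t \<le> norm (t *\<^sub>R n - (z - p))"
    using assms(1,4) by (auto simp: proximal_normal_iff dist_norm algebra_simps)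
  then have "t\<^sup>2 \<le> (norm (t *\<^sub>R n - (z - p)))\<^sup>2"
    using assms(3) by (intro power_mono) auto
  moreover have "t * (n \<bullet> (z - p)) = (t\<^sup>2 + (norm (z - p))\<^sup>2 - (norm (t *\<^sub>R n - (z - p)))\<^sup>2) / 2"
    using dot_norm_neg[of "t *\<^sub>R n" "z - p"] assms(2,3) by (simp add: power_mult_distrib)
  ultimately have "t * (n \<bullet> (z - p)) \<le> (norm (z - p))\<^sup>2 / 2"
    by (simp add: field_simps)
  then show ?thesis
    using assms(3) by (simp add: field_simps)
qed

lemma closed_proximal_normal_radii: "closed {t. proximal_normal S p n t}"
proof -
  have radii: "{t. proximal_normal S p n t} = (\<Inter>z\<in>S. {t. t \<le> dist (p + t *\<^sub>R n) z})"
    by (auto simp: proximal_normal_iff)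
  show ?thesis
    unfolding radii by (intro closed_INT ballI closed_Collect_le continuous_intros)
qed

lemma dist_gt_beyond_proximal_ball:
  assumes n: "norm n = 1" and "0 < \<tau>" "0 < h" "32 * h \<le> \<tau>"
    and pn: "proximal_normal S p n \<tau>" and "q \<in> S" and pq: "norm (p - q) \<le> \<tau> / 16"
    and zn: "(z - (p + \<tau> *\<^sub>R n)) \<bullet> n = h" and zb: "dist z (p + \<tau> *\<^sub>R n) \<le> 2 * h"
  shows "\<tau> < dist z q"
proof -
  define b where "b = p + \<tau> *\<^sub>R n"
  have "\<bar>(z - b) \<bullet> (p - q)\<bar> \<le> norm (z - b) * norm (p - q)"
    by (rule Cauchy_Schwarz_ineq2)
  also have "\<dots> \<le> (2 * h) * (\<tau> / 16)"
    using zb pq \<open>0 < h\<close> by (intro mult_mono) (auto simp: b_def dist_norm)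
  finally have "\<bar>(z - b) \<bullet> (p - q)\<bar> \<le> (2 * h) * (\<tau> / 16)" .
  moreover have "(z - b) \<bullet> (b - q) = \<tau> * h + (z - b) \<bullet> (p - q)"
    using zn by (simp add: b_def inner_add_right inner_commute algebra_simps)
  moreover have "0 < \<tau> * h"
    using \<open>0 < \<tau>\<close> \<open>0 < h\<close> by simp
  ultimately have pos: "0 < (z - b) \<bullet> (b - q)"
    by (simp add: abs_le_iff)
  have "\<tau> \<le> norm (b - q)"
    using pn \<open>q \<in> S\<close> by (simp add: proximal_normal_iff b_def dist_norm)
  then have "\<tau>\<^sup>2 \<le> (norm (b - q))\<^sup>2"
    using \<open>0 < \<tau>\<close> by (intro power_mono) auto
  moreover have "(norm (z - q))\<^sup>2 = (norm (z - b))\<^sup>2 + 2 * ((z - b) \<bullet> (b - q)) + (norm (b - q))\<^sup>2"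
    using dot_norm[of "z - b" "b - q"] by simp
  ultimately have "\<tau>\<^sup>2 < (norm (z - q))\<^sup>2"
    using pos by (smt (verit) zero_le_power2)
  then show ?thesis
    by (simp add: dist_norm power2_less_imp_less)
qed

lemma proximal_ball_rigid:
  assumes n: "norm n = 1" and "0 < \<tau>" and pn: "proximal_normal S p n \<tau>"
    and "p \<in> S" "q \<in> S" and pq: "norm (p - q) < \<tau>"
    and ball: "ball (p + (\<tau> + \<mu>) *\<^sub>R n) \<tau> \<inter> S = {}" and touch: "dist (p + (\<tau> + \<mu>) *\<^sub>R n) q = \<tau>"
    and "- 2 * \<tau> < \<mu>"
  shows "\<mu> = 0"
proof (rule antisym)
  define b where "b = p + \<tau> *\<^sub>R n"
  have "n \<bullet> (p - q) \<ge> - norm (p - q)"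
    using Cauchy_Schwarz_ineq2[of n "p - q"] n by simp
  then have nbq: "0 < n \<bullet> (b - q)"
    using pq n by (simp add: b_def inner_add_right algebra_simps norm_eq_1)
  have "\<tau> \<le> norm (b - q)"
    using pn \<open>q \<in> S\<close> by (simp add: proximal_normal_iff b_def dist_norm)
  then have "\<tau>\<^sup>2 \<le> (norm (b - q))\<^sup>2"
    using \<open>0 < \<tau>\<close> by (intro power_mono) auto
  moreover have "(norm (b - q + \<mu> *\<^sub>R n))\<^sup>2 = (norm (b - q))\<^sup>2 + 2 * (\<mu> * (n \<bullet> (b - q))) + \<mu>\<^sup>2"
    using dot_norm[of "b - q" "\<mu> *\<^sub>R n"] n by (simp add: inner_commute power_mult_distrib)
  moreover have "b - q + \<mu> *\<^sub>R n = (p + (\<tau> + \<mu>) *\<^sub>R n) - q"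
    by (simp add: b_def algebra_simps)
  ultimately have "\<tau>\<^sup>2 + 2 * (\<mu> * (n \<bullet> (b - q))) \<le> \<tau>\<^sup>2"
    using touch by (smt (verit) dist_norm zero_le_power2)
  then show "\<mu> \<le> 0"
    using nbq by (smt (verit) mult_pos_pos)
  have "\<tau> \<le> dist (p + (\<tau> + \<mu>) *\<^sub>R n) p"
    using ball \<open>p \<in> S\<close> by (meson disjoint_iff mem_ball not_le)
  then have "\<tau> \<le> \<bar>\<tau> + \<mu>\<bar>"
    using n by (simp add: dist_norm)
  then show "0 \<le> \<mu>"
    using \<open>- 2 * \<tau> < \<mu>\<close> by arith
qed

lemma norm_hyperplane_proj_le:
  assumes "norm n = 1"
  shows "norm (w - (w \<bullet> n) *\<^sub>R n) \<le> norm w"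
proof -
  have "(norm (w - (w \<bullet> n) *\<^sub>R n))\<^sup>2 = (norm w)\<^sup>2 - (w \<bullet> n)\<^sup>2"
    using assms unfolding power2_norm_eq_inner
    by (simp add: inner_diff_left inner_diff_right inner_commute[of n w] power2_eq_square norm_eq_1)
  then have "(norm (w - (w \<bullet> n) *\<^sub>R n))\<^sup>2 \<le> (norm w)\<^sup>2"
    by simp
  then show ?thesis
    by (rule power2_le_imp_le) simp
qed

lemma hyperplane_disc_fixed_point:
  fixes n c :: "'a::euclidean_space" and f :: "'a \<Rightarrow> 'a"
  assumes n: "norm n = 1" and "0 \<le> h"
    and contf: "continuous_on ({z. (z - c) \<bullet> n = 0} \<inter> cball c h) f"
    and small: "\<And>z. (z - c) \<bullet> n = 0 \<Longrightarrow> dist c z \<le> h \<Longrightarrow> norm (f z - (f z \<bullet> n) *\<^sub>R n) \<le> h"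
  shows "\<exists>z. (z - c) \<bullet> n = 0 \<and> dist c z \<le> h \<and> z - c = f z - (f z \<bullet> n) *\<^sub>R n"
proof -
  define E where "E = {z. (z - c) \<bullet> n = 0} \<inter> cball c h"
  define g where "g z = c + (f z - (f z \<bullet> n) *\<^sub>R n)" for z
  have hyperplane: "{z. (z - c) \<bullet> n = 0} = {z. n \<bullet> z = n \<bullet> c}"
    by (auto simp: inner_diff_left inner_commute[of n])
  have "compact E" "convex E" "E \<noteq> {}"
    using \<open>0 \<le> h\<close> unfolding E_def hyperplane
    by (auto intro!: closed_Int_compact convex_Int closed_hyperplane convex_hyperplane)
  moreover have "continuous_on E g"
    unfolding g_def E_def by (intro continuous_intros contf)
  moreover have "g z \<in> E" if "z \<in> E" for z
  proof -
    have "(g z - c) \<bullet> n = 0"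
      using n by (simp add: g_def inner_diff_left norm_eq_1)
    moreover have "dist c (g z) = norm (f z - (f z \<bullet> n) *\<^sub>R n)"
      by (simp add: g_def dist_norm norm_minus_commute)
    ultimately show ?thesis
      using small that by (simp add: E_def)
  qed
  ultimately obtain z where "z \<in> E" "g z = z"
    using brouwer[of E g] by blast
  moreover have "z - c = f z - (f z \<bullet> n) *\<^sub>R n"
    using \<open>g z = z\<close> unfolding g_def by (metis add_diff_cancel_left')
  moreover have "(z - c) \<bullet> n = 0" "dist c z \<le> h"
    using \<open>z \<in> E\<close> by (simp_all add: E_def)
  ultimately show ?thesis
    by blast
qed

lemma norm_convex_combination_sq:
  fixes a b :: "'a::real_inner"
  shows "(1 - \<mu>) * (norm a)\<^sup>2 + \<mu> * (norm b)\<^sup>2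
    = (norm ((1 - \<mu>) *\<^sub>R a + \<mu> *\<^sub>R b))\<^sup>2 + \<mu> * (1 - \<mu>) * (norm (a - b))\<^sup>2"
  unfolding power2_norm_eq_inner
  by (simp add: inner_add_left inner_add_right inner_diff_left inner_diff_right inner_commute[of b a] algebra_simps)

section \<open>Tangent cones\<close>

lemma sgn_limit_in_Tan:
  assumes "\<And>i. xs i \<in> S" "\<And>i. xs i \<noteq> x" "xs \<longlonglongrightarrow> x" "(\<lambda>i. sgn (xs i - x)) \<longlonglongrightarrow> l"
  shows "l \<in> Tan S x"
  unfolding Tan_def
proof (intro CollectI disjI2 exI conjI allI)
  show "(\<lambda>i. inverse (norm (xs i - x)) *\<^sub>R (xs i - x)) \<longlonglongrightarrow> l"
    using assms(4) by (simp add: sgn_div_norm)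
qed (use assms in auto)

lemma Tan_nonzero_approx:
  assumes "b \<in> Tan S a" "b \<noteq> 0" "\<eta> > 0" "l > 0"
  shows "\<exists>z\<in>S. 0 < dist z a \<and> dist z a \<le> l \<and> norm (sgn (z - a) - sgn b) \<le> \<eta>"
proof -
  obtain xs r where xs: "\<And>i. xs i \<in> S" "\<And>i. xs i \<noteq> a" "\<And>i. r i > 0"
    and lim_xs: "xs \<longlonglongrightarrow> a" and lim_r: "(\<lambda>i. r i *\<^sub>R (xs i - a)) \<longlonglongrightarrow> b"
    using assms(1,2) unfolding Tan_def by blast
  have "\<eta> * norm b / 2 > 0" using assms(2,3) by simp
  then have "\<forall>\<^sub>F i in sequentially. dist (r i *\<^sub>R (xs i - a)) b < \<eta> * norm b / 2"
    using lim_r unfolding tendsto_iff by blast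
  moreover have "\<forall>\<^sub>F i in sequentially. dist (xs i) a < l"
    using lim_xs assms(4) unfolding tendsto_iff by blast
  ultimately obtain i where i: "dist (r i *\<^sub>R (xs i - a)) b < \<eta> * norm b / 2" "dist (xs i) a < l"
    using eventually_happens'[OF trivial_limit_sequentially eventually_conj] by blast
  have "norm (sgn (xs i - a) - sgn b) = norm (sgn (r i *\<^sub>R (xs i - a)) - sgn b)"
    using xs(3)[of i] by (simp add: sgn_scaleR)
  also have "\<dots> \<le> 2 * norm (r i *\<^sub>R (xs i - a) - b) / norm b"
    using assms(2) by (rule norm_sgn_diff_le)
  also have "\<dots> \<le> 2 * (\<eta> * norm b / 2) / norm b"
    using i(1) by (intro divide_right_mono mult_left_mono) (auto simp: dist_norm)
  also have "\<dots> = \<eta>"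
    using assms(2) by simp
  finally show ?thesis
    using xs(1,2) i(2) by (intro bexI[of _ "xs i"]) auto
qed

lemma closest_point_shift_bounds:
  fixes S :: "'a::euclidean_space set"
  assumes "closed S" "S \<noteq> {}" "x \<in> S" "norm v = 1" "0 < t" "0 < c"
    and w: "w = closest_point S (x + t *\<^sub>R v) - x" and big: "c * t < norm w"
  shows "norm w \<le> 2 * t" "c / 2 < v \<bullet> sgn w"
proof -
  have sq: "(norm w)\<^sup>2 \<le> 2 * t * (v \<bullet> w)"
    unfolding w using closest_point_shift_sq_le[OF assms(1-4)] .
  have "0 < c * t"
    using assms(5,6) by simp
  then have w_pos: "0 < norm w"
    using big by linarith
  have "v \<bullet> w \<le> norm w"
    using norm_cauchy_schwarz[of v w] assms(4) by simp
  then have "(norm w)\<^sup>2 \<le> 2 * t * norm w"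
    using assms(5) by (intro order_trans[OF sq] mult_left_mono) auto
  then show "norm w \<le> 2 * t"
    using w_pos by (simp add: power2_eq_square)
  have "norm w * (v \<bullet> sgn w) = v \<bullet> w"
    using w_pos by (simp add: sgn_div_norm)
  then have "(norm w)\<^sup>2 \<le> 2 * t * norm w * (v \<bullet> sgn w)"
    using sq by (simp add: mult.assoc)
  then have "norm w \<le> 2 * t * (v \<bullet> sgn w)"
    using w_pos by (simp add: power2_eq_square)
  then have "t * c < t * (2 * (v \<bullet> sgn w))"
    using big by (simp add: algebra_simps)
  then show "c / 2 < v \<bullet> sgn w"
    using assms(5) by simp
qed

lemma closest_point_shift_orthogonal_Tan:
  fixes S :: "'a::euclidean_space set"
  assumes S: "closed S" "S \<noteq> {}" and x: "x \<in> S" and v: "norm v = 1"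
    and orth: "\<And>u. u \<in> Tan S x \<Longrightarrow> v \<bullet> u = 0" and c: "c > 0"
  shows "\<exists>\<tau>>0. \<forall>t. 0 < t \<and> t < \<tau> \<longrightarrow> norm (closest_point S (x + t *\<^sub>R v) - x) \<le> c * t"
proof (rule ccontr)
  define W where "W t = closest_point S (x + t *\<^sub>R v) - x" for t
  assume "\<not> ?thesis"
  then have "\<forall>\<tau>>0. \<exists>t. 0 < t \<and> t < \<tau> \<and> c * t < norm (W t)"
    by (auto simp: W_def not_le)
  then have "\<exists>t. 0 < t \<and> t < 1 / Suc i \<and> c * t < norm (W t)" for i
    by simp
  then obtain T where T: "\<And>i. 0 < T i" "\<And>i. T i < 1 / Suc i" "\<And>i. c * T i < norm (W (T i))"
    by metis
  note bounds = closest_point_shift_bounds[OF S x v T(1) c W_def T(3)]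
  have "bounded (range (\<lambda>i. sgn (W (T i))))"
    by (rule boundedI[of _ 1]) (auto simp: norm_sgn)
  then obtain l \<sigma> where \<sigma>: "strict_mono \<sigma>" and lim: "((\<lambda>i. sgn (W (T i))) \<circ> \<sigma>) \<longlonglongrightarrow> l"
    using bounded_imp_convergent_subsequence by blast
  have W_small: "norm (W (T i)) \<le> 2 * inverse (real (Suc i))" for i
  proof -
    have "T i \<le> inverse (real (Suc i))"
      using T(2)[of i] by (simp add: inverse_eq_divide)
    then show ?thesis
      using bounds(1)[of i] by linarith
  qed
  have "(\<lambda>i. 2 * inverse (real (Suc i))) \<longlonglongrightarrow> 0"
    by (intro tendsto_mult_right_zero LIMSEQ_inverse_real_of_nat)
  then have "(\<lambda>i. W (T i)) \<longlonglongrightarrow> 0"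
    by (rule Lim_null_comparison[rotated]) (use W_small in \<open>simp add: always_eventually\<close>)
  then have "(\<lambda>i. W (T (\<sigma> i))) \<longlonglongrightarrow> 0"
    using LIMSEQ_subseq_LIMSEQ[OF _ \<sigma>] unfolding o_def by blast
  then have lim_x: "(\<lambda>i. x + W (T (\<sigma> i))) \<longlonglongrightarrow> x"
    using tendsto_add[OF tendsto_const, of _ 0 sequentially x] by simp
  have mem: "x + W (T (\<sigma> i)) \<in> S" for i
    using closest_point_in_set[OF S] by (simp add: W_def)
  have neq: "x + W (T (\<sigma> i)) \<noteq> x" for i
  proof -
    have "0 < c * T (\<sigma> i)"
      using T(1) c by simp
    then show ?thesis
      using T(3)[of "\<sigma> i"] by auto
  qed
  have lim_sgn: "(\<lambda>i. sgn (x + W (T (\<sigma> i)) - x)) \<longlonglongrightarrow> l"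
    using lim by (simp add: o_def)
  have "l \<in> Tan S x"
    using mem neq lim_x lim_sgn by (rule sgn_limit_in_Tan)
  moreover have "c / 2 \<le> v \<bullet> l"
  proof (rule LIMSEQ_le_const)
    show "(\<lambda>i. v \<bullet> sgn (W (T (\<sigma> i)))) \<longlonglongrightarrow> v \<bullet> l"
      using lim unfolding o_def by (intro tendsto_inner tendsto_const)
    show "\<exists>N. \<forall>i\<ge>N. c / 2 \<le> v \<bullet> sgn (W (T (\<sigma> i)))"
      using bounds(2) less_imp_le by blast
  qed
  ultimately show False
    using orth c by force
qed

section \<open>Subspaces spanned by near-bases\<close>

lemma orthogonal_comp_iff: "v \<in> S\<^sup>\<bottom> \<longleftrightarrow> (\<forall>u\<in>S. v \<bullet> u = 0)"
  by (auto simp: orthogonal_comp_def orthogonal_def inner_commute)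

lemma exists_unit_in_span:
  fixes S :: "'a::euclidean_space set"
  assumes "0 < dim S"
  shows "\<exists>u\<in>span S. norm u = 1"
proof -
  have "\<not> S \<subseteq> {0}"
    using assms dim_eq_0[of S] by linarith
  then obtain s where "s \<in> S" "s \<noteq> 0"
    by blast
  then show ?thesis
    by (intro bexI[of _ "sgn s"]) (simp_all add: norm_sgn sgn_div_norm span_base span_mul)
qed

lemma exists_near_in_span:
  fixes x :: "'a::euclidean_space"
  assumes "0 \<le> C" and normal: "\<And>v. v \<in> S\<^sup>\<bottom> \<Longrightarrow> norm v = 1 \<Longrightarrow> v \<bullet> x \<le> C"
  shows "\<exists>p\<in>span S. norm (x - p) \<le> C"
proof -
  obtain p r where p: "p \<in> span S" and r: "\<And>w. w \<in> span S \<Longrightarrow> orthogonal r w"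
    and x: "x = p + r"
    using orthogonal_subspace_decomp_exists by blast
  have "norm r \<le> C"
  proof (cases "r = 0")
    case False
    have "sgn r \<in> S\<^sup>\<bottom>"
      using r span_base by (auto simp: orthogonal_comp_iff sgn_div_norm orthogonal_def)
    moreover have "sgn r \<bullet> x = norm r"
      using r[OF p] False
      by (simp add: x inner_add_right sgn_div_norm orthogonal_def inner_commute dot_square_norm power2_eq_square)
    ultimately show ?thesis
      using normal False by (metis norm_sgn)
  qed (use assms(1) in simp)
  then show ?thesis
    using p x by (intro bexI[of _ p]) auto
qed

definition coeff_bounded :: "'b set \<Rightarrow> ('b \<Rightarrow> 'a::real_normed_vector) \<Rightarrow> real \<Rightarrow> bool" where
  "coeff_bounded B G M \<longleftrightarrow> (\<forall>c. (\<Sum>b\<in>B. \<bar>c b\<bar>) \<le> M * norm (\<Sum>b\<in>B. c b *\<^sub>R G b))"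

lemma biorthogonal_exists:
  fixes B :: "'a::euclidean_space set"
  assumes "independent B"
  shows "\<exists>d. \<forall>b\<in>B. \<forall>b'\<in>B. d b \<bullet> b' = (if b = b' then 1 else 0)"
proof -
  have "\<exists>w. w \<bullet> b = 1 \<and> w \<in> (B - {b})\<^sup>\<bottom>" if b: "b \<in> B" for b
  proof -
    obtain y z where y: "y \<in> span (B - {b})" and z: "\<And>w. w \<in> span (B - {b}) \<Longrightarrow> orthogonal z w"
      and yz: "b = y + z"
      using orthogonal_subspace_decomp_exists by blast
    have "b \<notin> span (B - {b})"
      using assms b by (simp add: dependent_def)
    then have "z \<noteq> 0"
      using y yz by auto
    moreover have "z \<bullet> b = z \<bullet> z"
      using z[OF y] by (simp add: yz inner_add_right orthogonal_def)
    moreover have "z \<in> (B - {b})\<^sup>\<bottom>"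
      using z[OF span_base] unfolding orthogonal_comp_iff orthogonal_def by blast
    ultimately show ?thesis
      by (intro exI[of _ "inverse (z \<bullet> z) *\<^sub>R z"]) (auto simp: orthogonal_comp_iff)
  qed
  then obtain d where "\<And>b. b \<in> B \<Longrightarrow> d b \<bullet> b = 1 \<and> d b \<in> (B - {b})\<^sup>\<bottom>"
    by metis
  then show ?thesis
    by (auto simp: orthogonal_comp_iff)
qed

lemma independent_coeff_bounded:
  fixes B :: "'a::euclidean_space set"
  assumes "finite B" "independent B"
  shows "\<exists>M>0. coeff_bounded B (\<lambda>b. b) M"
proof -
  obtain d where d: "\<And>b b'. b \<in> B \<Longrightarrow> b' \<in> B \<Longrightarrow> d b \<bullet> b' = (if b = b' then 1 else 0)"
    using biorthogonal_exists[OF assms(2)] by blast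
  define M where "M = 1 + (\<Sum>b\<in>B. norm (d b))"
  have "(\<Sum>b\<in>B. \<bar>c b\<bar>) \<le> M * norm (\<Sum>b\<in>B. c b *\<^sub>R b)" for c
  proof -
    define s where "s = (\<Sum>b\<in>B. c b *\<^sub>R b)"
    have "c b = d b \<bullet> s" if "b \<in> B" for b
    proof -
      have "d b \<bullet> s = (\<Sum>b'\<in>B. if b = b' then c b' else 0)"
        unfolding s_def inner_sum_right using d that by (intro sum.cong) auto
      then show ?thesis
        using assms(1) that by simp
    qed
    then have "(\<Sum>b\<in>B. \<bar>c b\<bar>) \<le> (\<Sum>b\<in>B. norm (d b) * norm s)"
      by (intro sum_mono) (simp add: Cauchy_Schwarz_ineq2)
    also have "\<dots> \<le> M * norm s"
      by (simp add: M_def sum_distrib_right[symmetric] mult_right_mono)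
    finally show ?thesis
      unfolding s_def .
  qed
  moreover have "M > 0"
    using sum_nonneg[of B "\<lambda>b. norm (d b)"] by (simp add: M_def)
  ultimately show ?thesis
    unfolding coeff_bounded_def by blast
qed

lemma coeff_bounded_perturb:
  fixes B :: "'b set" and G H :: "'b \<Rightarrow> 'a::real_normed_vector"
  assumes "coeff_bounded B G M" "0 \<le> M"
    and near: "\<And>b. b \<in> B \<Longrightarrow> norm (H b - G b) \<le> \<kappa>" and "\<kappa> * M \<le> 1 / 2"
  shows "coeff_bounded B H (2 * M)"
  unfolding coeff_bounded_def
proof
  fix c :: "'b \<Rightarrow> real"
  define \<Sigma> where "\<Sigma> = (\<Sum>b\<in>B. \<bar>c b\<bar>)"
  have "norm (\<Sum>b\<in>B. c b *\<^sub>R (G b - H b)) \<le> (\<Sum>b\<in>B. \<bar>c b\<bar> * \<kappa>)"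
    using near by (intro order_trans[OF norm_sum] sum_mono) (simp add: mult_left_mono norm_minus_commute)
  also have "\<dots> = \<kappa> * \<Sigma>"
    by (simp add: \<Sigma>_def sum_distrib_left mult.commute)
  finally have "norm (\<Sum>b\<in>B. c b *\<^sub>R G b) \<le> norm (\<Sum>b\<in>B. c b *\<^sub>R H b) + \<kappa> * \<Sigma>"
    using norm_triangle_ineq[of "\<Sum>b\<in>B. c b *\<^sub>R H b" "\<Sum>b\<in>B. c b *\<^sub>R (G b - H b)"]
    by (simp add: algebra_simps sum_subtractf)
  have "\<Sigma> \<le> M * norm (\<Sum>b\<in>B. c b *\<^sub>R G b)"
    using assms(1) by (simp add: coeff_bounded_def \<Sigma>_def)
  also have "\<dots> \<le> M * (norm (\<Sum>b\<in>B. c b *\<^sub>R H b) + \<kappa> * \<Sigma>)"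
    using \<open>norm (\<Sum>b\<in>B. c b *\<^sub>R G b) \<le> _\<close> assms(2) by (rule mult_left_mono)
  also have "\<dots> = M * norm (\<Sum>b\<in>B. c b *\<^sub>R H b) + (\<kappa> * M) * \<Sigma>"
    by (simp add: algebra_simps)
  finally have "\<Sigma> \<le> M * norm (\<Sum>b\<in>B. c b *\<^sub>R H b) + (\<kappa> * M) * \<Sigma>" .
  moreover have "(\<kappa> * M) * \<Sigma> \<le> (1 / 2) * \<Sigma>"
    using assms(4) by (intro mult_right_mono) (simp_all add: \<Sigma>_def sum_nonneg)
  ultimately show "\<Sigma> \<le> 2 * M * norm (\<Sum>b\<in>B. c b *\<^sub>R H b)"
    by linarith
qed

lemma coeff_bounded_zero_combination:
  assumes "coeff_bounded B H M" "finite B" "(\<Sum>b\<in>B. c b *\<^sub>R H b) = 0" "b \<in> B"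
  shows "c b = 0"
proof -
  have "(\<Sum>b\<in>B. \<bar>c b\<bar>) \<le> M * norm (\<Sum>b\<in>B. c b *\<^sub>R H b)"
    using assms(1) unfolding coeff_bounded_def by blast
  then have "(\<Sum>b\<in>B. \<bar>c b\<bar>) \<le> 0"
    using assms(3) by simp
  moreover have "\<bar>c b\<bar> \<le> (\<Sum>b\<in>B. \<bar>c b\<bar>)"
    using assms(2,4) by (intro member_le_sum) auto
  ultimately show ?thesis
    by simp
qed

lemma coeff_bounded_independent:
  fixes H :: "'b \<Rightarrow> 'a::real_normed_vector"
  assumes "coeff_bounded B H M" "finite B"
  shows "inj_on H B" "independent (H ` B)"
proof -
  show inj: "inj_on H B"
  proof
    fix b b' assume bb': "b \<in> B" "b' \<in> B" "H b = H b'"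
    define c where "c x = (if x = b then 1 else 0) - (if x = b' then 1 else (0::real))" for x
    have "(\<Sum>x\<in>B. c x *\<^sub>R H x) = H b - H b'"
      using assms(2) bb'(1,2)
      by (simp add: c_def scaleR_diff_left sum_subtractf if_distrib[of "\<lambda>r. r *\<^sub>R _"] cong: if_cong)
    then have "c b = 0"
      using coeff_bounded_zero_combination[OF assms] bb' by simp
    then show "b = b'"
      by (auto simp: c_def split: if_splits)
  qed
  show "independent (H ` B)"
  proof
    assume "dependent (H ` B)"
    then obtain f where f: "\<exists>v\<in>H ` B. f v \<noteq> 0" "(\<Sum>v\<in>H ` B. f v *\<^sub>R v) = 0"
      using dependent_finite[of "H ` B"] assms(2) by auto
    have "(\<Sum>b\<in>B. f (H b) *\<^sub>R H b) = 0"
      using f(2) by (simp add: sum.reindex[OF inj])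
    then show False
      using f(1) coeff_bounded_zero_combination[OF assms, of "\<lambda>b. f (H b)"] by auto
  qed
qed

lemma coeff_bounded_spans:
  fixes H :: "'b \<Rightarrow> 'a::euclidean_space"
  assumes "coeff_bounded B H M" "finite B"
    and "H ` B \<subseteq> span S" "dim S = card B" "u \<in> span S"
  shows "\<exists>c. u = (\<Sum>b\<in>B. c b *\<^sub>R H b)"
proof -
  note HB = coeff_bounded_independent[OF assms(1,2)]
  have "span S \<subseteq> span (H ` B)"
    using card_ge_dim_independent[of "H ` B" "span S"] assms(3,4) HB by (simp add: card_image)
  then obtain f where "u = (\<Sum>v\<in>H ` B. f v *\<^sub>R v)"
    using span_finite[of "H ` B"] assms(2,5) by auto
  then show ?thesis
    by (auto simp: sum.reindex[OF HB(1)])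
qed

lemma near_basis_in_span:
  fixes G h :: "'b \<Rightarrow> 'a::euclidean_space" and V :: "'a set"
  assumes "coeff_bounded B G M" "0 < M"
    and near: "\<And>b. b \<in> B \<Longrightarrow> norm (h b - G b) \<le> 1 / (8 * M)"
    and "0 \<le> C" "C \<le> 1 / (8 * M)"
    and normal: "\<And>b v. b \<in> B \<Longrightarrow> v \<in> V\<^sup>\<bottom> \<Longrightarrow> norm v = 1 \<Longrightarrow> \<bar>v \<bullet> h b\<bar> \<le> C"
  shows "\<exists>H. (\<forall>b\<in>B. H b \<in> span V \<and> norm (h b - H b) \<le> C) \<and> coeff_bounded B H (2 * M)"
proof -
  have "\<exists>p\<in>span V. norm (h b - p) \<le> C" if "b \<in> B" for b
    using exists_near_in_span[OF \<open>0 \<le> C\<close>] normal[OF that] by (meson abs_le_D1)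
  then obtain H where H: "\<And>b. b \<in> B \<Longrightarrow> H b \<in> span V" "\<And>b. b \<in> B \<Longrightarrow> norm (h b - H b) \<le> C"
    by metis
  have H_near: "norm (H b - G b) \<le> 1 / (4 * M)" if "b \<in> B" for b
  proof -
    have "norm (H b - G b) \<le> norm (h b - H b) + norm (h b - G b)"
      by (metis norm_diff_triangle_le norm_minus_commute order_refl)
    also have "\<dots> \<le> 1 / (8 * M) + 1 / (8 * M)"
      using H(2)[OF that] near[OF that] \<open>C \<le> _\<close> by linarith
    finally show ?thesis by simp
  qed
  have "1 / (4 * M) * M \<le> 1 / 2"
    using \<open>0 < M\<close> by simp
  then have "coeff_bounded B H (2 * M)"
    using coeff_bounded_perturb[OF assms(1) _ H_near] \<open>0 < M\<close> by simp
  then show ?thesis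
    using H by blast
qed

lemma infdist_span_le_near_basis:
  fixes G h :: "'b \<Rightarrow> 'a::euclidean_space" and V W :: "'a set"
  assumes "finite B" "coeff_bounded B G M" "0 < M" "dim V = card B"
    and near: "\<And>b. b \<in> B \<Longrightarrow> norm (h b - G b) \<le> 1 / (8 * M)"
    and "0 \<le> C" "C \<le> 1 / (8 * M)"
    and V_normal: "\<And>b v. b \<in> B \<Longrightarrow> v \<in> V\<^sup>\<bottom> \<Longrightarrow> norm v = 1 \<Longrightarrow> \<bar>v \<bullet> h b\<bar> \<le> C"
    and W_normal: "\<And>b v. b \<in> B \<Longrightarrow> v \<in> W\<^sup>\<bottom> \<Longrightarrow> norm v = 1 \<Longrightarrow> \<bar>v \<bullet> h b\<bar> \<le> C"
    and u: "u \<in> span V" "norm u = 1"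
  shows "infdist u (span W) \<le> 4 * M * C"
proof -
  obtain H where H: "\<And>b. b \<in> B \<Longrightarrow> H b \<in> span V" "\<And>b. b \<in> B \<Longrightarrow> norm (h b - H b) \<le> C"
    and HB: "coeff_bounded B H (2 * M)"
    using near_basis_in_span[OF assms(2,3) near assms(6,7) V_normal] by blast
  then obtain c where uc: "u = (\<Sum>b\<in>B. c b *\<^sub>R H b)"
    using coeff_bounded_spans[OF _ assms(1) _ assms(4) u(1)] by blast
  have csum: "(\<Sum>b\<in>B. \<bar>c b\<bar>) \<le> 2 * M"
    using HB u(2) unfolding coeff_bounded_def uc by (metis mult.right_neutral)
  have "v \<bullet> u \<le> 4 * M * C" if v: "v \<in> W\<^sup>\<bottom>" "norm v = 1" for v
  proof -
    have "\<bar>v \<bullet> H b\<bar> \<le> 2 * C" if "b \<in> B" for b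
    proof -
      have "\<bar>v \<bullet> (h b - H b)\<bar> \<le> C"
        using Cauchy_Schwarz_ineq2[of v "h b - H b"] H(2)[OF that] v(2) by simp
      then show ?thesis
        using W_normal[OF that v] by (simp add: inner_diff_right)
    qed
    then have "v \<bullet> u \<le> (\<Sum>b\<in>B. \<bar>c b\<bar> * (2 * C))"
      unfolding uc inner_sum_right inner_scaleR_right
      by (intro sum_mono) (metis abs_ge_self abs_mult mult_left_mono abs_ge_zero order_trans)
    also have "\<dots> = (\<Sum>b\<in>B. \<bar>c b\<bar>) * (2 * C)"
      by (simp add: sum_distrib_right)
    also have "\<dots> \<le> 2 * M * (2 * C)"
      using csum \<open>0 \<le> C\<close> by (intro mult_right_mono) simp_all
    finally show ?thesis by simp
  qed
  then obtain p where "p \<in> span W" "norm (u - p) \<le> 4 * M * C"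
    using exists_near_in_span[of "4 * M * C" W u] \<open>0 < M\<close> \<open>0 \<le> C\<close> by auto
  then show ?thesis
    by (intro infdist_le2) (auto simp: dist_norm)
qed

lemma grass_dist_le:
  assumes "\<exists>u\<in>U. norm u = 1" "\<exists>v\<in>V. norm v = 1"
    and "\<And>u. u \<in> U \<Longrightarrow> norm u = 1 \<Longrightarrow> infdist u V \<le> c"
    and "\<And>v. v \<in> V \<Longrightarrow> norm v = 1 \<Longrightarrow> infdist v U \<le> c"
  shows "grass_dist U V \<le> c"
  unfolding grass_dist_def using assms by (auto intro!: cSUP_least)

section \<open>Sets of reach at least \<open>e\<close>\<close>

locale reach_ge =
  fixes A :: "'a::euclidean_space set" and e :: real
  assumes reach_pos: "0 < e"
    and unique_nearest: "\<And>x. infdist x A < e \<Longrightarrow> \<exists>!p. p \<in> A \<and> dist x p = infdist x A"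
begin

lemma nonempty: "A \<noteq> {}"
  using unique_nearest[of 0] reach_pos by (auto simp: infdist_def)

lemma closed: "closed A"
proof -
  have "x \<in> A" if "x \<in> closure A" for x
  proof -
    have "infdist x A = 0"
      using that nonempty in_closure_iff_infdist_zero by blast
    then show ?thesis
      using unique_nearest[of x] reach_pos by auto
  qed
  then show ?thesis
    using closure_subset_eq by blast
qed

lemma closest_point_in: "closest_point A x \<in> A"
  using closed nonempty by (rule closest_point_in_set)

lemma dist_closest_point: "dist x (closest_point A x) = infdist x A"
  using closed nonempty by (rule dist_closest_point_eq_infdist)

lemma closest_point_eqI:
  assumes "infdist x A < e" "p \<in> A" "dist x p = infdist x A"
  shows "closest_point A x = p"
  using unique_nearest[OF assms(1)] assms(2,3) closest_point_in dist_closest_point by blast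

lemma closed_graph_closest_point:
  assumes "closed S" "S \<subseteq> {x. infdist x A < e}"
  shows "closed ((\<lambda>x. (x, closest_point A x)) ` S)"
proof -
  have graph: "(\<lambda>x. (x, closest_point A x)) ` S = (S \<times> A) \<inter> {z. dist (fst z) (snd z) = infdist (fst z) A}"
  proof (intro equalityI subsetI)
    fix z assume "z \<in> (\<lambda>x. (x, closest_point A x)) ` S"
    then show "z \<in> (S \<times> A) \<inter> {z. dist (fst z) (snd z) = infdist (fst z) A}"
      using closest_point_in dist_closest_point by auto
  next
    fix z assume z: "z \<in> (S \<times> A) \<inter> {z. dist (fst z) (snd z) = infdist (fst z) A}"
    then have "closest_point A (fst z) = snd z"
      using assms(2) by (intro closest_point_eqI) auto
    then show "z \<in> (\<lambda>x. (x, closest_point A x)) ` S"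
      using z by (intro image_eqI[of _ _ "fst z"]) (auto simp: prod_eq_iff)
  qed
  have "closed {z. dist (fst z) (snd z) = infdist (fst z) A}"
    by (intro closed_Collect_eq continuous_intros)
  then show ?thesis
    unfolding graph using assms(1) closed by (intro closed_Int closed_Times)
qed

lemma continuous_on_closest_point: "continuous_on {x. infdist x A < e} (closest_point A)"
proof -
  define U where "U = {x. infdist x A < e}"
  have "open U"
    unfolding U_def by (intro open_Collect_less continuous_on_infdist continuous_on_id continuous_on_const)
  have "isCont (closest_point A) x" if "x \<in> U" for x
  proof -
    have "\<exists>r>0. cball x r \<subseteq> U"
      using \<open>open U\<close> that by (simp add: open_contains_cball)
    then obtain r where r: "0 < r" "cball x r \<subseteq> U"
      by blast
    have maps: "closest_point A y \<in> cball x (r + e)" if "y \<in> cball x r" for y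
    proof -
      have "dist y (closest_point A y) < e"
        using that r(2) dist_closest_point[of y] by (auto simp: U_def)
      moreover have "dist x (closest_point A y) \<le> dist x y + dist y (closest_point A y)"
        by (rule dist_triangle)
      ultimately show ?thesis
        using that by simp
    qed
    have "continuous_on (cball x r) (closest_point A)"
    proof (rule continuous_from_closed_graph[of "cball x (r + e)"])
      show "closest_point A \<in> cball x r \<rightarrow> cball x (r + e)"
        using maps by blast
      show "closed ((\<lambda>y. (y, closest_point A y)) ` cball x r)"
        using r(2) by (intro closed_graph_closest_point) (auto simp: U_def)
    qed simp
    then show ?thesis
      by (rule continuous_on_interior) (simp add: r(1))
  qed
  then show ?thesis
    unfolding U_def by (simp add: continuous_at_imp_continuous_on)
qed

lemma proximal_normal_center:
  assumes "p \<in> A" "norm n = 1" "0 < t" "t < e" "proximal_normal A p n t"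
  shows "infdist (p + t *\<^sub>R n) A = t" "closest_point A (p + t *\<^sub>R n) = p"
proof -
  have "dist (p + t *\<^sub>R n) p = t"
    using assms(2,3) by (simp add: dist_norm)
  moreover have "t \<le> infdist (p + t *\<^sub>R n) A"
    using assms(5) nonempty unfolding infdist_notempty[OF nonempty] proximal_normal_iff
    by (intro cINF_greatest) auto
  ultimately show "infdist (p + t *\<^sub>R n) A = t"
    using infdist_le[OF assms(1)] by (metis antisym)
  then show "closest_point A (p + t *\<^sub>R n) = p"
    using assms(1,4) \<open>dist _ p = t\<close> by (intro closest_point_eqI) auto
qed

lemma proximal_center_nbhd:
  assumes p: "p \<in> A" and n: "norm n = 1" and \<tau>: "0 < \<tau>" "\<tau> < e"
    and pn: "proximal_normal A p n \<tau>"
  obtains h where "0 < h" "32 * h \<le> \<tau>"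
    and "\<And>z. dist z (p + \<tau> *\<^sub>R n) \<le> 2 * h \<Longrightarrow>
           infdist z A < e \<and> dist (closest_point A z) p < \<tau> / 16 \<and> \<bar>infdist z A - \<tau>\<bar> \<le> 2 * h
           \<and> norm (sgn (z - closest_point A z) - n) \<le> 1 / 4"
proof -
  define b where "b = p + \<tau> *\<^sub>R n"
  have b: "infdist b A = \<tau>" "closest_point A b = p"
    using proximal_normal_center[OF p n \<tau> pn] by (simp_all add: b_def)
  obtain r where r: "0 < r"
    and cont: "\<And>z. infdist z A < e \<Longrightarrow> dist z b < r \<Longrightarrow> dist (closest_point A z) p < \<tau> / 16"
    using continuous_on_closest_point \<tau> b unfolding continuous_on_iff
    by (metis (no_types, lifting) mem_Collect_eq divide_pos_pos zero_less_numeral)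
  define h where "h = min (r / 4) (min (\<tau> / 32) ((e - \<tau>) / 4))"
  have "0 < h"
    using r \<tau> by (simp add: h_def)
  moreover have "h \<le> r / 4" "h \<le> \<tau> / 32" "h \<le> (e - \<tau>) / 4"
    unfolding h_def by (intro min.coboundedI1 min.coboundedI2 order_refl)+
  ultimately have h: "0 < h" "4 * h \<le> r" "32 * h \<le> \<tau>" "4 * h \<le> e - \<tau>"
    by (simp_all add: field_simps)
  have "infdist z A < e \<and> dist (closest_point A z) p < \<tau> / 16 \<and> \<bar>infdist z A - \<tau>\<bar> \<le> 2 * h
      \<and> norm (sgn (z - closest_point A z) - n) \<le> 1 / 4"
    if "dist z b \<le> 2 * h" for z
  proof (intro conjI)
    show d: "\<bar>infdist z A - \<tau>\<bar> \<le> 2 * h"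
      using infdist_triangle_abs[of z A b] b(1) that by simp
    then show "infdist z A < e"
      using h by simp
    then show close: "dist (closest_point A z) p < \<tau> / 16"
      using cont that h by simp
    have "(z - closest_point A z) - \<tau> *\<^sub>R n = (z - b) + (p - closest_point A z)"
      by (simp add: b_def algebra_simps)
    then have "norm ((z - closest_point A z) - \<tau> *\<^sub>R n) \<le> norm (z - b) + norm (p - closest_point A z)"
      by (simp only: norm_triangle_ineq)
    also have "\<dots> \<le> \<tau> / 8"
      using that close h by (simp add: dist_norm norm_minus_commute)
    finally have small: "norm ((z - closest_point A z) - \<tau> *\<^sub>R n) \<le> \<tau> / 8" .
    have "norm (sgn (z - closest_point A z) - sgn (\<tau> *\<^sub>R n))
        \<le> 2 * norm ((z - closest_point A z) - \<tau> *\<^sub>R n) / norm (\<tau> *\<^sub>R n)"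
      using n \<tau>(1) by (intro norm_sgn_diff_le) auto
    also have "\<dots> \<le> 2 * (\<tau> / 8) / \<tau>"
      using small n \<tau>(1) by (simp add: divide_right_mono)
    finally show "norm (sgn (z - closest_point A z) - n) \<le> 1 / 4"
      using n \<tau>(1) by (simp add: sgn_scaleR sgn_div_norm)
  qed
  then show ?thesis
    using that[OF h(1,3)] by (simp add: b_def)
qed

text \<open>Federer's map: \<open>z\<close> goes to the projection onto the hyperplane orthogonal to \<open>n\<close> of
  \<open>(infdist z A - \<tau>) *\<^sub>R N z\<close>, where \<open>N z\<close> is the unit vector from the nearest point to \<open>z\<close>;
  translated by \<open>c\<close>, it maps a small disc centred at \<open>c\<close> beyond \<open>p + \<tau> *\<^sub>R n\<close> into itself.\<close>

lemma normal_map_fixed_point: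
  assumes p: "p \<in> A" and n: "norm n = 1" and \<tau>: "0 < \<tau>" "\<tau> < e"
    and pn: "proximal_normal A p n \<tau>"
  obtains z h where "0 < h" "32 * h \<le> \<tau>" "infdist z A < e" "dist (closest_point A z) p < \<tau> / 16"
    "(z - (p + \<tau> *\<^sub>R n)) \<bullet> n = h" "dist z (p + \<tau> *\<^sub>R n) \<le> 2 * h"
    "z - (p + \<tau> *\<^sub>R n + h *\<^sub>R n) = (infdist z A - \<tau>) *\<^sub>R sgn (z - closest_point A z)
        - (((infdist z A - \<tau>) *\<^sub>R sgn (z - closest_point A z)) \<bullet> n) *\<^sub>R n"
proof -
  define b where "b = p + \<tau> *\<^sub>R n"
  obtain h where h: "0 < h" "32 * h \<le> \<tau>"
    and near: "\<And>z. dist z b \<le> 2 * h \<Longrightarrow>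
           infdist z A < e \<and> dist (closest_point A z) p < \<tau> / 16 \<and> \<bar>infdist z A - \<tau>\<bar> \<le> 2 * h
           \<and> norm (sgn (z - closest_point A z) - n) \<le> 1 / 4"
    using proximal_center_nbhd[OF p n \<tau> pn] unfolding b_def by blast
  define c where "c = b + h *\<^sub>R n"
  define f where "f z = (infdist z A - \<tau>) *\<^sub>R sgn (z - closest_point A z)" for z
  have disc: "dist z b \<le> 2 * h" if "dist c z \<le> h" for z
    using that dist_triangle[of z b c] n h(1) by (simp add: c_def dist_commute dist_norm)
  have "continuous_on ({z. (z - c) \<bullet> n = 0} \<inter> cball c h) f"
  proof -
    let ?E = "{z. (z - c) \<bullet> n = 0} \<inter> cball c h"
    have "?E \<subseteq> {x. infdist x A < e}"
      using near disc by auto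
    moreover have "z - closest_point A z \<noteq> 0" if "z \<in> ?E" for z
    proof -
      have "\<bar>infdist z A - \<tau>\<bar> \<le> 2 * h"
        using near[OF disc] that by simp
      then have "0 < infdist z A"
        using h by linarith
      then show ?thesis
        using dist_closest_point[of z] by auto
    qed
    ultimately show ?thesis
      unfolding f_def
      by (intro continuous_intros continuous_on_subset[OF continuous_on_closest_point]) auto
  qed
  moreover have "norm (f z - (f z \<bullet> n) *\<^sub>R n) \<le> h" if "dist c z \<le> h" for z
  proof -
    define N where "N = sgn (z - closest_point A z)"
    have proj: "N - (N \<bullet> n) *\<^sub>R n = (N - n) - ((N - n) \<bullet> n) *\<^sub>R n"
      using n by (simp add: algebra_simps inner_diff_left norm_eq_1)
    have "norm (N - n) \<le> 1 / 4"
      using near[OF disc[OF that]] by (simp add: N_def)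
    then have "norm (N - (N \<bullet> n) *\<^sub>R n) \<le> 1 / 4"
      unfolding proj using norm_hyperplane_proj_le[OF n, of "N - n"] by linarith
    moreover have "f z - (f z \<bullet> n) *\<^sub>R n = (infdist z A - \<tau>) *\<^sub>R (N - (N \<bullet> n) *\<^sub>R n)"
      by (simp add: f_def N_def algebra_simps)
    moreover have "\<bar>infdist z A - \<tau>\<bar> * norm (N - (N \<bullet> n) *\<^sub>R n) \<le> 2 * h * (1 / 4)"
      using near[OF disc[OF that]] \<open>norm (N - (N \<bullet> n) *\<^sub>R n) \<le> 1 / 4\<close> h(1)
      by (intro mult_mono) auto
    ultimately show ?thesis
      using h(1) by simp
  qed
  ultimately obtain z where z: "(z - c) \<bullet> n = 0" "dist c z \<le> h" "z - c = f z - (f z \<bullet> n) *\<^sub>R n"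
    using hyperplane_disc_fixed_point[OF n, of h c f] h(1) by auto
  show ?thesis
  proof (rule that[OF h])
    show "infdist z A < e" "dist (closest_point A z) p < \<tau> / 16"
      using near[OF disc[OF z(2)]] by simp_all
    show "(z - (p + \<tau> *\<^sub>R n)) \<bullet> n = h"
      using z(1) n by (simp add: b_def c_def inner_diff_left algebra_simps norm_eq_1)
    show "dist z (p + \<tau> *\<^sub>R n) \<le> 2 * h"
      using disc[OF z(2)] by (simp add: b_def)
    show "z - (p + \<tau> *\<^sub>R n + h *\<^sub>R n) = (infdist z A - \<tau>) *\<^sub>R sgn (z - closest_point A z)
        - (((infdist z A - \<tau>) *\<^sub>R sgn (z - closest_point A z)) \<bullet> n) *\<^sub>R n"
      using z(3) unfolding c_def b_def f_def .
  qed
qed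

text \<open>The ball of radius \<open>\<tau>\<close> about \<open>q + \<tau> *\<^sub>R N z\<close>, where \<open>q\<close> is the nearest point to a fixed
  point \<open>z\<close> of Federer's map, lies in \<open>ball z (infdist z A)\<close>; the fixed-point equation puts its
  centre on the normal ray through \<open>p\<close>, and rigidity then forces \<open>q = p\<close>.\<close>

lemma fixed_point_on_ray:
  assumes p: "p \<in> A" and n: "norm n = 1" and \<tau>: "0 < \<tau>" "\<tau> < e"
    and pn: "proximal_normal A p n \<tau>" and h: "0 < h" "32 * h \<le> \<tau>"
    and near: "dist (closest_point A z) p < \<tau> / 16"
      "(z - (p + \<tau> *\<^sub>R n)) \<bullet> n = h" "dist z (p + \<tau> *\<^sub>R n) \<le> 2 * h"
    and fixed: "z - (p + \<tau> *\<^sub>R n + h *\<^sub>R n) = w - (w \<bullet> n) *\<^sub>R n"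
    and w: "w = (infdist z A - \<tau>) *\<^sub>R sgn (z - closest_point A z)"
  shows "z = p + infdist z A *\<^sub>R n" "\<tau> < infdist z A"
proof -
  define b q d N where "b = p + \<tau> *\<^sub>R n" and "q = closest_point A z"
    and "d = infdist z A" and "N = sgn (z - q)"
  have qA: "q \<in> A" and dzq: "dist z q = d"
    by (simp_all add: q_def d_def closest_point_in dist_closest_point)
  have pq: "norm (p - q) < \<tau> / 16"
    using near(1) by (simp add: q_def dist_norm norm_minus_commute)
  show "\<tau> < infdist z A"
    using dist_gt_beyond_proximal_ball[OF n \<tau>(1) h(1,2) pn qA _ near(2,3)] pq dzq
    by (simp add: d_def)
  then have "\<tau> < d" by (simp add: d_def)
  have zq: "z - q = d *\<^sub>R N" and N: "norm N = 1"
    using dzq \<open>\<tau> < d\<close> \<tau>(1) by (auto simp: N_def sgn_div_norm dist_norm)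
  define m where "m = q + \<tau> *\<^sub>R N"
  have zm: "z - m = w"
    using zq by (simp add: m_def w d_def N_def q_def algebra_simps)
  have dzm: "dist z m = d - \<tau>"
    using zm w N \<open>\<tau> < d\<close> by (simp add: dist_norm d_def N_def q_def)
  have m_ball: "ball m \<tau> \<inter> A = {}"
  proof -
    have "ball m \<tau> \<subseteq> ball z d"
    proof
      fix y assume "y \<in> ball m \<tau>"
      then show "y \<in> ball z d"
        using dzm dist_triangle[of z y m] by simp
    qed
    then show ?thesis
      using ball_infdist_disjoint[of z A] by (auto simp: d_def)
  qed
  have mq: "dist m q = \<tau>"
    using N \<tau>(1) by (simp add: m_def dist_norm)
  define \<mu> where "\<mu> = h - w \<bullet> n"
  have m_eq: "m = p + (\<tau> + \<mu>) *\<^sub>R n"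
    using fixed zm by (simp add: \<mu>_def algebra_simps)
  have "d \<le> dist z p"
    using p by (simp add: d_def infdist_le)
  also have "\<dots> \<le> 2 * h + \<tau>"
    using near(3) dist_triangle[of z p b] n \<tau>(1) by (simp add: b_def dist_norm)
  finally have "dist m b \<le> 4 * h"
    using dist_triangle[of m b z] dzm near(3) by (simp add: b_def dist_commute)
  then have "\<bar>\<mu>\<bar> \<le> 4 * h"
    using n by (simp add: m_eq b_def dist_norm scaleR_add_left)
  then have "\<mu> = 0"
    using proximal_ball_rigid[OF n \<tau>(1) pn p qA _ m_ball[unfolded m_eq] mq[unfolded m_eq]] pq h
    by simp
  then have "dist b q = \<tau>" "m = b"
    using mq m_eq by (simp_all add: b_def)
  then have "q = p"
    using proximal_normal_center[OF p n \<tau> pn] closest_point_eqI[of b q] qA \<tau>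
    by (simp add: b_def dist_commute)
  then have "N = n"
    using \<open>m = b\<close> \<tau>(1) by (simp add: m_def b_def)
  then show "z = p + infdist z A *\<^sub>R n"
    using zq \<open>q = p\<close> by (simp add: d_def algebra_simps)
qed

lemma proximal_normal_extend:
  assumes p: "p \<in> A" and n: "norm n = 1" and \<tau>: "0 < \<tau>" "\<tau> < e"
    and pn: "proximal_normal A p n \<tau>"
  shows "\<exists>t>\<tau>. t < e \<and> proximal_normal A p n t"
proof -
  obtain z h where h: "0 < h" "32 * h \<le> \<tau>" and z: "infdist z A < e"
    and near: "dist (closest_point A z) p < \<tau> / 16"
      "(z - (p + \<tau> *\<^sub>R n)) \<bullet> n = h" "dist z (p + \<tau> *\<^sub>R n) \<le> 2 * h"
    and fixed: "z - (p + \<tau> *\<^sub>R n + h *\<^sub>R n) = (infdist z A - \<tau>) *\<^sub>R sgn (z - closest_point A z)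
        - (((infdist z A - \<tau>) *\<^sub>R sgn (z - closest_point A z)) \<bullet> n) *\<^sub>R n"
    using normal_map_fixed_point[OF p n \<tau> pn] by blast
  have on_ray: "z = p + infdist z A *\<^sub>R n" "\<tau> < infdist z A"
    using fixed_point_on_ray[OF p n \<tau> pn h near fixed refl] by simp_all
  have "proximal_normal A p n (infdist z A)"
    using ball_infdist_disjoint[of z A] on_ray(1) by (simp add: proximal_normal_def)
  then show ?thesis
    using on_ray(2) z by blast
qed

lemma proximal_normal_upto_reach:
  assumes p: "p \<in> A" and n: "norm n = 1" and s: "0 < s" "s < e" "proximal_normal A p n s"
    and t: "0 \<le> t" "t < e"
  shows "proximal_normal A p n t"
proof (cases "t \<le> s")
  case True
  then show ?thesis
    using proximal_normal_mono[OF s(3) n t(1)] by simp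
next
  case False
  define G where "G = {u. proximal_normal A p n u} \<inter> {..t}"
  have "s \<in> G" "bdd_above G"
    using s(3) False by (auto simp: G_def bdd_above_def)
  then have "Sup G \<in> closure G"
    by (intro closure_contains_Sup) auto
  moreover have "closed G"
    unfolding G_def by (intro closed_Int closed_proximal_normal_radii closed_atMost)
  ultimately have "Sup G \<in> G"
    by (simp add: closure_closed)
  then have pn: "proximal_normal A p n (Sup G)" and "Sup G \<le> t" and "s \<le> Sup G"
    using cSup_upper[OF \<open>s \<in> G\<close> \<open>bdd_above G\<close>] by (auto simp: G_def)
  show ?thesis
  proof (cases "Sup G = t")
    case False
    then obtain u where u: "Sup G < u" "u < e" "proximal_normal A p n u"
      using proximal_normal_extend[OF p n _ _ pn] s(1) \<open>s \<le> Sup G\<close> \<open>Sup G \<le> t\<close> t(2) by auto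
    then have "min u t \<in> G"
      using proximal_normal_mono[OF u(3) n] \<open>s \<le> Sup G\<close> s(1) \<open>Sup G \<le> t\<close>
      by (auto simp: G_def)
    then have "min u t \<le> Sup G"
      using \<open>bdd_above G\<close> by (rule cSup_upper)
    then show ?thesis
      using u(1) False \<open>Sup G \<le> t\<close> by linarith
  qed (use pn in simp)
qed

lemma proximal_normal_closest_point:
  assumes x: "infdist x A < e" "x \<notin> A" and t: "0 \<le> t" "t < e"
  shows "proximal_normal A (closest_point A x) (sgn (x - closest_point A x)) t"
proof -
  define p s where "p = closest_point A x" and "s = infdist x A"
  have "0 < s"
    using x(2) closed nonempty by (simp add: s_def infdist_pos_not_in_closed)
  moreover have "norm (x - p) = s"
    using dist_closest_point[of x] by (simp add: p_def s_def dist_norm)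
  ultimately have "p + s *\<^sub>R sgn (x - p) = x" and n: "norm (sgn (x - p)) = 1"
    by (auto simp: sgn_div_norm norm_sgn)
  then have "proximal_normal A p (sgn (x - p)) s"
    using ball_infdist_disjoint[of x A] by (simp add: proximal_normal_def s_def)
  then show ?thesis
    using proximal_normal_upto_reach[OF _ n \<open>0 < s\<close> _ _ t] closest_point_in x(1)
    by (simp add: p_def s_def)
qed

lemma proximal_normal_near_orthogonal_Tan:
  assumes x: "x \<in> A" and v: "norm v = 1" "v \<in> (Tan A x)\<^sup>\<bottom>" and t: "0 < t" "t < e"
    and c: "0 < c" "c < 1"
  shows "\<exists>p\<in>A. \<exists>N. proximal_normal A p N t \<and> norm (p - x) \<le> c \<and> norm (N - v) \<le> 2 * c"
proof -
  obtain \<tau> where \<tau>: "0 < \<tau>" "\<And>s. 0 < s \<Longrightarrow> s < \<tau> \<Longrightarrow> norm (closest_point A (x + s *\<^sub>R v) - x) \<le> c * s"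
    using closest_point_shift_orthogonal_Tan[OF closed nonempty x v(1) _ c(1)] v(2)
    by (auto simp: orthogonal_comp_iff)
  define s where "s = min (\<tau> / 2) (min 1 (e / 2))"
  have s: "0 < s" "s < \<tau>" "s \<le> 1" "s < e"
    using \<tau>(1) reach_pos by (auto simp: s_def)
  define q where "q = x + s *\<^sub>R v"
  define p where "p = closest_point A q"
  have w: "norm (p - x) \<le> c * s"
    using \<tau>(2)[OF s(1,2)] by (simp add: p_def q_def)
  have q_tube: "infdist q A < e"
    using infdist_le[OF x, of q] v(1) s by (simp add: q_def dist_norm)
  have qp: "(q - p) - s *\<^sub>R v = - (p - x)"
    by (simp add: q_def)
  have "s - c * s \<le> norm (q - p)"
    using norm_triangle_ineq2[of "s *\<^sub>R v" "p - x"] w v(1) s(1) by (simp add: q_def algebra_simps)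
  moreover have "c * s < s"
    using c s(1) by simp
  ultimately have "q \<notin> A"
    using dist_closest_point[of q] by (auto simp: p_def dist_norm)
  then have pn: "proximal_normal A p (sgn (q - p)) t"
    using proximal_normal_closest_point[OF q_tube _ _ t(2)] t(1) by (simp add: p_def)
  have "norm (sgn (q - p) - sgn (s *\<^sub>R v)) \<le> 2 * norm ((q - p) - s *\<^sub>R v) / norm (s *\<^sub>R v)"
    using v(1) s(1) by (intro norm_sgn_diff_le) auto
  also have "\<dots> = 2 * norm (p - x) / s"
    unfolding qp using v(1) s(1) by (simp add: norm_minus_commute)
  also have "\<dots> \<le> 2 * c"
    using w s(1) by (simp add: divide_le_eq mult.commute)
  finally have "norm (sgn (q - p) - v) \<le> 2 * c"
    using v(1) s(1) by (simp add: sgn_scaleR sgn_div_norm)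
  moreover have "norm (p - x) \<le> c"
    using w mult_left_le[of s c] c(1) s(3) by linarith
  ultimately show ?thesis
    using pn closest_point_in by (auto simp: p_def)
qed

lemma proximal_normal_of_orthogonal_Tan:
  assumes x: "x \<in> A" and v: "norm v = 1" "v \<in> (Tan A x)\<^sup>\<bottom>" and t: "0 < t" "t < e"
  shows "proximal_normal A x v t"
  unfolding proximal_normal_iff
proof
  fix z assume "z \<in> A"
  show "t \<le> dist (x + t *\<^sub>R v) z"
  proof (rule field_le_epsilon)
    fix \<epsilon> :: real assume "0 < \<epsilon>"
    define c where "c = min (1 / 2) (\<epsilon> / (1 + 2 * t))"
    have c: "0 < c" "c < 1"
      using \<open>0 < \<epsilon>\<close> t(1) by (simp_all add: c_def)
    have "c \<le> \<epsilon> / (1 + 2 * t)"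
      by (simp add: c_def)
    then have c_eps: "c * (1 + 2 * t) \<le> \<epsilon>"
      using t(1) by (simp add: le_divide_eq)
    obtain p N where p: "p \<in> A" and pn: "proximal_normal A p N t"
      and px: "norm (p - x) \<le> c" and Nv: "norm (N - v) \<le> 2 * c"
      using proximal_normal_near_orthogonal_Tan[OF x v t c(1,2)] by blast
    have "t \<le> dist (p + t *\<^sub>R N) z"
      using pn \<open>z \<in> A\<close> by (simp add: proximal_normal_iff)
    also have "\<dots> \<le> dist (p + t *\<^sub>R N) (x + t *\<^sub>R v) + dist (x + t *\<^sub>R v) z"
      by (rule dist_triangle)
    also have "dist (p + t *\<^sub>R N) (x + t *\<^sub>R v) \<le> norm (p - x) + t * norm (N - v)"
    proof -
      have eq: "p + t *\<^sub>R N - (x + t *\<^sub>R v) = (p - x) + t *\<^sub>R (N - v)"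
        by (simp add: algebra_simps)
      have "norm ((p - x) + t *\<^sub>R (N - v)) \<le> norm (p - x) + t * norm (N - v)"
        using norm_triangle_ineq[of "p - x" "t *\<^sub>R (N - v)"] t(1) by simp
      then show ?thesis
        unfolding dist_norm eq .
    qed
    also have "\<dots> \<le> c + t * (2 * c)"
      using px Nv t(1) by (intro add_mono mult_left_mono) auto
    finally show "t \<le> dist (x + t *\<^sub>R v) z + \<epsilon>"
      using c_eps by (simp add: algebra_simps)
  qed
qed

lemma abs_inner_orthogonal_Tan_le:
  assumes x: "x \<in> A" and v: "norm v = 1" "v \<in> (Tan A x)\<^sup>\<bottom>" and z: "z \<in> A"
    and t: "0 < t" "t < e"
  shows "\<bar>v \<bullet> (z - x)\<bar> \<le> (norm (z - x))\<^sup>2 / (2 * t)"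
proof -
  have "- v \<in> (Tan A x)\<^sup>\<bottom>" "norm (- v) = 1"
    using v by (simp_all add: orthogonal_comp_iff)
  then have "- v \<bullet> (z - x) \<le> (norm (z - x))\<^sup>2 / (2 * t)"
    using proximal_normal_inner_le[OF proximal_normal_of_orthogonal_Tan[OF x _ _ t]] z t(1) by blast
  moreover have "v \<bullet> (z - x) \<le> (norm (z - x))\<^sup>2 / (2 * t)"
    using proximal_normal_inner_le[OF proximal_normal_of_orthogonal_Tan[OF x v t] v(1) t(1) z] .
  ultimately show ?thesis
    by (simp add: abs_le_iff)
qed

lemma infdist_segment_le:
  assumes x: "x \<in> A" and z: "z \<in> A" and \<mu>: "0 \<le> \<mu>" "\<mu> \<le> 1"
    and t: "0 < t" "t < e" and xz: "dist x z \<le> t"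
  shows "infdist (x + \<mu> *\<^sub>R (z - x)) A \<le> \<mu> * (dist x z)\<^sup>2 / t"
proof -
  define m \<delta> l where "m = x + \<mu> *\<^sub>R (z - x)" and "\<delta> = infdist m A" and "l = dist x z"
  have "\<delta> \<le> dist m x"
    using infdist_le[OF x] by (simp add: \<delta>_def)
  also have "\<dots> = \<mu> * l"
    using \<mu>(1) by (simp add: m_def l_def dist_norm norm_minus_commute)
  also have "\<dots> \<le> l"
    using \<mu> by (simp add: l_def mult_left_le_one_le)
  finally have "\<delta> \<le> t"
    using xz by (simp add: l_def)
  show ?thesis
  proof (cases "m \<in> A")
    case True
    then show ?thesis
      using \<mu> t(1) by (simp add: m_def[symmetric])
  next
    case False
    define p n where "p = closest_point A m" and "n = sgn (m - p)"
    have m_tube: "infdist m A < e"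
      using \<open>\<delta> \<le> t\<close> t(2) by (simp add: \<delta>_def)
    have pn: "proximal_normal A p n t"
      using proximal_normal_closest_point[OF m_tube False _ t(2)] t(1) by (simp add: p_def n_def)
    have "0 < \<delta>"
      using False closed nonempty by (simp add: \<delta>_def infdist_pos_not_in_closed)
    moreover have "norm (m - p) = \<delta>"
      using dist_closest_point[of m] by (simp add: p_def \<delta>_def dist_norm)
    ultimately have n: "norm n = 1" and "n \<bullet> (m - p) = \<delta>"
      by (auto simp: n_def sgn_div_norm norm_sgn dot_square_norm power2_eq_square)
    have mp: "m - p = (1 - \<mu>) *\<^sub>R (x - p) + \<mu> *\<^sub>R (z - p)"
      by (simp add: m_def algebra_simps)
    have "\<delta> = (1 - \<mu>) * (n \<bullet> (x - p)) + \<mu> * (n \<bullet> (z - p))"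
      using \<open>n \<bullet> (m - p) = \<delta>\<close> by (simp add: mp inner_add_right)
    also have "\<dots> \<le> (1 - \<mu>) * ((norm (x - p))\<^sup>2 / (2 * t)) + \<mu> * ((norm (z - p))\<^sup>2 / (2 * t))"
      using proximal_normal_inner_le[OF pn n t(1)] x z \<mu> by (intro add_mono mult_left_mono) auto
    also have "\<dots> = (\<delta>\<^sup>2 + \<mu> * (1 - \<mu>) * l\<^sup>2) / (2 * t)"
      using norm_convex_combination_sq[of \<mu> "x - p" "z - p"] \<open>norm (m - p) = \<delta>\<close>
      by (simp add: mp[symmetric] l_def dist_norm add_divide_distrib[symmetric] ring_distribs)
    finally have "2 * t * \<delta> \<le> \<delta>\<^sup>2 + \<mu> * (1 - \<mu>) * l\<^sup>2"
      using t(1) by (simp add: field_simps)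
    moreover have "\<delta>\<^sup>2 \<le> t * \<delta>"
      using \<open>\<delta> \<le> t\<close> \<open>0 < \<delta>\<close> by (simp add: power2_eq_square mult_right_mono)
    moreover have "(\<mu> * l\<^sup>2) * (1 - \<mu>) \<le> \<mu> * l\<^sup>2"
      using \<mu> by (intro mult_left_le) auto
    then have "\<mu> * (1 - \<mu>) * l\<^sup>2 \<le> \<mu> * l\<^sup>2"
      by (simp add: mult_ac)
    ultimately have "t * \<delta> \<le> \<mu> * l\<^sup>2"
      by linarith
    then show ?thesis
      using t(1) by (simp add: \<delta>_def l_def m_def field_simps)
  qed
qed

text \<open>Almost convexity: the point at distance \<open>s\<close> from \<open>x\<close> towards \<open>z\<close> is within
  \<open>s * dist x z / t\<close> of \<open>A\<close>.\<close>

lemma exists_point_toward: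
  assumes x: "x \<in> A" and z: "z \<in> A" and s: "0 < s" "s \<le> dist x z"
    and t: "0 < t" "t < e" and xz: "dist x z \<le> t"
  shows "\<exists>w\<in>A. norm ((w - x) /\<^sub>R s - sgn (z - x)) \<le> dist x z / t"
proof -
  define l where "l = dist x z"
  have "0 < l"
    using s unfolding l_def by linarith
  define m where "m = x + (s / l) *\<^sub>R (z - x)"
  have mx: "m - x = s *\<^sub>R sgn (z - x)"
    using \<open>0 < l\<close> by (simp add: m_def l_def sgn_div_norm dist_norm norm_minus_commute divide_inverse)
  have "infdist m A \<le> (s / l) * l\<^sup>2 / t"
    unfolding m_def l_def using s \<open>0 < l\<close> t xz
    by (intro infdist_segment_le[OF x z]) (simp_all add: l_def)
  also have "\<dots> = s * (l / t)"
    using \<open>0 < l\<close> by (simp add: power2_eq_square)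
  finally have m_near: "infdist m A \<le> s * (l / t)" .
  define w where "w = closest_point A m"
  have eq: "(w - x) /\<^sub>R s - sgn (z - x) = (w - m) /\<^sub>R s"
    using mx s(1) by (simp add: algebra_simps)
  have "norm ((w - m) /\<^sub>R s) = infdist m A / s"
    using dist_closest_point[of m] s(1) by (simp add: w_def dist_norm norm_minus_commute divide_inverse mult.commute)
  moreover have "infdist m A / s \<le> l / t"
    using m_near s(1) by (simp add: pos_divide_le_eq mult.commute)
  ultimately have "norm ((w - x) /\<^sub>R s - sgn (z - x)) \<le> l / t"
    unfolding eq by linarith
  then show ?thesis
    using closest_point_in unfolding w_def l_def by blast
qed

lemma Tan_direction_persists:
  assumes a: "a \<in> A" and b: "b \<in> Tan A a" "b \<noteq> 0" and \<epsilon>: "0 < \<epsilon>"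
  shows "\<exists>\<delta>>0. \<forall>x\<in>A. dist a x < \<delta> \<longrightarrow> (\<forall>s. 0 < s \<and> s < \<delta> \<longrightarrow>
           (\<exists>w\<in>A. norm (w - x) \<le> 2 * s \<and> norm ((w - x) /\<^sub>R s - sgn b) \<le> \<epsilon>))"
proof -
  define t where "t = e / 2"
  have t: "0 < t" "t < e"
    using reach_pos by (simp_all add: t_def)
  define lmax where "lmax = min (t / 2) (\<epsilon> * t / 4)"
  have lmax: "0 < lmax" "2 * lmax \<le> t" "2 * lmax / t \<le> \<epsilon> / 2"
    using t \<epsilon> by (auto simp: lmax_def min_def field_simps)
  obtain z where z: "z \<in> A" "0 < dist z a" "dist z a \<le> lmax" "norm (sgn (z - a) - sgn b) \<le> \<epsilon> / 6"
    using Tan_nonzero_approx[OF b] \<epsilon> lmax(1) by (metis divide_pos_pos zero_less_numeral)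
  define l where "l = dist z a"
  define \<delta> where "\<delta> = min (\<epsilon> / 6 * l) (l / 4)"
  have \<delta>: "0 < \<delta>" "\<delta> \<le> \<epsilon> / 6 * l" "\<delta> \<le> l / 4"
    using z(2) \<epsilon> by (simp_all add: \<delta>_def l_def)
  have "\<exists>w\<in>A. norm (w - x) \<le> 2 * s \<and> norm ((w - x) /\<^sub>R s - sgn b) \<le> \<epsilon>"
    if x: "x \<in> A" "dist a x < \<delta>" and s: "0 < s" "s < \<delta>" for x s
  proof -
    have "l - \<delta> \<le> dist x z" "dist x z \<le> l + \<delta>"
      using x(2) dist_triangle[of z a x] dist_triangle[of x z a] by (simp_all add: l_def dist_commute)
    then have sz: "s \<le> dist x z" and "dist x z \<le> 2 * lmax"
      using s \<delta>(3) z(3) lmax(1) unfolding l_def by linarith+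
    then have "dist x z / t \<le> \<epsilon> / 2" and zt: "dist x z \<le> t"
      using lmax(2,3) t(1) divide_right_mono[of "dist x z" "2 * lmax" t] by linarith+
    obtain w where w: "w \<in> A" and toward: "norm ((w - x) /\<^sub>R s - sgn (z - x)) \<le> dist x z / t"
      using exists_point_toward[OF x(1) z(1) s(1) sz t zt] by blast
    have "norm ((w - x) /\<^sub>R s) \<le> norm (sgn (z - x)) + norm ((w - x) /\<^sub>R s - sgn (z - x))"
      by (rule norm_triangle_sub)
    also have "\<dots> \<le> 2"
    proof -
      have "dist x z / t \<le> 1"
        using zt t(1) by simp
      moreover have "norm (sgn (z - x)) \<le> 1"
        by (simp add: norm_sgn)
      ultimately show ?thesis
        using toward by linarith
    qed
    finally have "norm (w - x) / s \<le> 2"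
      using s(1) by (simp add: divide_inverse mult.commute)
    then have "norm (w - x) \<le> 2 * s"
      using s(1) by (simp add: pos_divide_le_eq mult.commute)
    have "norm (sgn (z - x) - sgn (z - a)) \<le> 2 * norm ((z - x) - (z - a)) / norm (z - a)"
      using z(2) by (intro norm_sgn_diff_le) simp
    also have "\<dots> = 2 * dist a x / l"
      by (simp add: l_def dist_norm norm_minus_commute)
    also have "\<dots> \<le> 2 * (\<epsilon> / 6 * l) / l"
      using x(2) \<delta>(2) z(2) by (intro divide_right_mono) (simp_all add: l_def)
    also have "\<dots> = \<epsilon> / 3"
      using z(2) by (simp add: l_def)
    finally have sgn_close: "norm (sgn (z - x) - sgn (z - a)) \<le> \<epsilon> / 3" .
    have "(w - x) /\<^sub>R s - sgn b
        = ((w - x) /\<^sub>R s - sgn (z - x)) + (sgn (z - x) - sgn (z - a)) + (sgn (z - a) - sgn b)"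
      by simp
    then have "norm ((w - x) /\<^sub>R s - sgn b) \<le> norm ((w - x) /\<^sub>R s - sgn (z - x))
        + norm (sgn (z - x) - sgn (z - a)) + norm (sgn (z - a) - sgn b)"
      by (metis order_trans[OF norm_triangle_ineq add_right_mono[OF norm_triangle_ineq]])
    then have "norm ((w - x) /\<^sub>R s - sgn b) \<le> \<epsilon>"
      using toward \<open>dist x z / t \<le> \<epsilon> / 2\<close> sgn_close z(4) by linarith
    moreover note \<open>norm (w - x) \<le> 2 * s\<close>
    ultimately show ?thesis
      using w by blast
  qed
  then show ?thesis
    using \<delta>(1) by blast
qed

lemma abs_inner_orthogonal_Tan_chord_le:
  assumes y: "y \<in> A" and v: "norm v = 1" "v \<in> (Tan A y)\<^sup>\<bottom>" and wx: "w \<in> A" "x \<in> A"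
    and "norm (w - y) \<le> 3 * \<rho>" "norm (x - y) \<le> \<rho>" and t: "0 < t" "t < e"
  shows "\<bar>v \<bullet> (w - x)\<bar> \<le> 5 * \<rho>\<^sup>2 / t"
proof -
  have "v \<bullet> (w - x) = v \<bullet> (w - y) - v \<bullet> (x - y)"
    by (simp add: inner_diff_right)
  then have "\<bar>v \<bullet> (w - x)\<bar> \<le> \<bar>v \<bullet> (w - y)\<bar> + \<bar>v \<bullet> (x - y)\<bar>"
    by (simp only: abs_triangle_ineq4)
  also have "\<dots> \<le> (norm (w - y))\<^sup>2 / (2 * t) + (norm (x - y))\<^sup>2 / (2 * t)"
    using abs_inner_orthogonal_Tan_le[OF y v _ t] wx by (intro add_mono) auto
  also have "\<dots> \<le> (3 * \<rho>)\<^sup>2 / (2 * t) + \<rho>\<^sup>2 / (2 * t)"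
    using assms(6,7) t(1) by (intro add_mono divide_right_mono power_mono) auto
  also have "\<dots> = 5 * \<rho>\<^sup>2 / t"
    using t(1) by (simp add: field_simps power2_eq_square)
  finally show ?thesis .
qed

lemma infdist_Tan_span_le:
  assumes B: "finite B" "coeff_bounded B (\<lambda>b. b) M" "0 < M"
    and K: "0 < K" "\<And>b. b \<in> B \<Longrightarrow> norm b \<le> K"
    and x: "x \<in> A" "dim (Tan A x) = card B" and y: "y \<in> A" "x \<noteq> y"
    and W: "\<And>b. b \<in> B \<Longrightarrow> W b \<in> A \<and> norm (W b - x) \<le> 2 * dist x y
              \<and> norm ((W b - x) /\<^sub>R dist x y - sgn b) \<le> 1 / (8 * M * K)"
    and t: "0 < t" "t < e" and small: "5 * K * dist x y / t \<le> 1 / (8 * M)"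
    and u: "u \<in> span (Tan A x)" "norm u = 1"
  shows "infdist u (span (Tan A y)) \<le> 20 * M * K / t * dist x y"
proof -
  define \<rho> where "\<rho> = dist x y"
  have \<rho>: "0 < \<rho>"
    using y(2) by (simp add: \<rho>_def)
  define h where "h b = norm b *\<^sub>R ((W b - x) /\<^sub>R \<rho>)" for b
  define C where "C = 5 * K * \<rho> / t"
  have "independent B"
    using coeff_bounded_independent(2)[OF B(2,1)] by simp
  then have nonzero: "b \<noteq> 0" if "b \<in> B" for b
    using that dependent_zero by blast
  have h_near: "norm (h b - b) \<le> 1 / (8 * M)" if "b \<in> B" for b
  proof -
    have "h b - b = norm b *\<^sub>R ((W b - x) /\<^sub>R \<rho> - sgn b)"
      using nonzero[OF that] by (simp add: h_def sgn_div_norm algebra_simps)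
    then have "norm (h b - b) = norm b * norm ((W b - x) /\<^sub>R \<rho> - sgn b)"
      by simp
    also have "\<dots> \<le> K * (1 / (8 * M * K))"
      using W[OF that] K(1) K(2)[OF that] by (intro mult_mono) (auto simp: \<rho>_def)
    finally show ?thesis
      using K(1) by simp
  qed
  have normal: "\<bar>v \<bullet> h b\<bar> \<le> C"
    if "y' \<in> {x, y}" "v \<in> (Tan A y')\<^sup>\<bottom>" "norm v = 1" "b \<in> B" for y' v b
  proof -
    have y': "y' \<in> A" "norm (x - y') \<le> \<rho>"
      using that(1) x(1) y(1) by (auto simp: \<rho>_def dist_norm)
    have Wb: "W b \<in> A" "norm (W b - y') \<le> 3 * \<rho>"
      using W[OF that(4)] y'(2) norm_triangle_ineq[of "W b - x" "x - y'"] by (auto simp: \<rho>_def)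
    have "\<bar>v \<bullet> (W b - x)\<bar> \<le> 5 * \<rho>\<^sup>2 / t"
      using abs_inner_orthogonal_Tan_chord_le[OF y'(1) that(3,2) Wb(1) x(1) Wb(2) y'(2) t] .
    then have "\<bar>v \<bullet> h b\<bar> \<le> (K / \<rho>) * (5 * \<rho>\<^sup>2 / t)"
      using K(1) K(2)[OF that(4)] \<rho> by (auto simp: h_def abs_mult divide_inverse intro!: mult_mono)
    also have "\<dots> = C"
      using \<rho> by (simp add: C_def power2_eq_square)
    finally show ?thesis .
  qed
  have "infdist u (span (Tan A y)) \<le> 4 * M * C"
    using B x(2) h_near _ _ normal[of x] normal[of y] u
    by (rule infdist_span_le_near_basis) (use small \<rho> t K(1) in \<open>simp_all add: C_def \<rho>_def\<close>)
  then show ?thesis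
    by (simp add: C_def \<rho>_def)
qed

lemma Tan_directions_persist_uniformly:
  assumes a: "a \<in> A" and "finite B" "B \<subseteq> Tan A a" "0 \<notin> B" and \<epsilon>: "0 < \<epsilon>"
  shows "\<exists>\<delta>>0. \<forall>b\<in>B. \<forall>x\<in>A. dist a x < \<delta> \<longrightarrow> (\<forall>s. 0 < s \<and> s < \<delta> \<longrightarrow>
           (\<exists>w\<in>A. norm (w - x) \<le> 2 * s \<and> norm ((w - x) /\<^sub>R s - sgn b) \<le> \<epsilon>))"
  using assms(2-4)
proof (induction B rule: finite_induct)
  case empty
  then show ?case by (intro exI[of _ 1]) simp
next
  case (insert b B)
  then obtain \<delta>1 where \<delta>1: "0 < \<delta>1" "\<forall>b\<in>B. \<forall>x\<in>A. dist a x < \<delta>1 \<longrightarrow> (\<forall>s. 0 < s \<and> s < \<delta>1 \<longrightarrow>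
           (\<exists>w\<in>A. norm (w - x) \<le> 2 * s \<and> norm ((w - x) /\<^sub>R s - sgn b) \<le> \<epsilon>))"
    by auto
  obtain \<delta>2 where \<delta>2: "0 < \<delta>2" "\<forall>x\<in>A. dist a x < \<delta>2 \<longrightarrow> (\<forall>s. 0 < s \<and> s < \<delta>2 \<longrightarrow>
           (\<exists>w\<in>A. norm (w - x) \<le> 2 * s \<and> norm ((w - x) /\<^sub>R s - sgn b) \<le> \<epsilon>))"
    using Tan_direction_persists[OF a _ _ \<epsilon>, of b] insert.prems by auto
  show ?case
    using \<delta>1 \<delta>2 by (intro exI[of _ "min \<delta>1 \<delta>2"]) auto
qed

lemma Tan_span_lipschitz_one_sided:
  assumes a: "a \<in> A"
  shows "\<exists>\<delta>>0. \<exists>L. \<forall>x\<in>A. \<forall>y\<in>A. dist a x < \<delta> \<longrightarrow> dist a y < \<delta> \<longrightarrow> dim (Tan A x) = dim (Tan A a) \<longrightarrow>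
           (\<forall>u\<in>span (Tan A x). norm u = 1 \<longrightarrow> infdist u (span (Tan A y)) \<le> L * dist x y)"
proof -
  obtain B where B: "B \<subseteq> Tan A a" "independent B" "card B = dim (Tan A a)"
    by (meson basis_exists)
  have finB: "finite B"
    using B(2) by (rule finiteI_independent)
  obtain M where M: "0 < M" "coeff_bounded B (\<lambda>b. b) M"
    using independent_coeff_bounded[OF finB B(2)] by blast
  define K where "K = 1 + (\<Sum>b\<in>B. norm b)"
  have "0 \<le> (\<Sum>b\<in>B. norm b)"
    by (simp add: sum_nonneg)
  then have K: "0 < K" "\<And>b. b \<in> B \<Longrightarrow> norm b \<le> K"
    using finB member_le_sum[of _ B norm] by (force simp: K_def)+
  define t where "t = e / 2"
  have t: "0 < t" "t < e"
    using reach_pos by (simp_all add: t_def)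
  have "0 \<notin> B"
    using B(2) dependent_zero by blast
  moreover have "0 < 1 / (8 * M * K)"
    using M(1) K(1) by simp
  ultimately obtain \<delta>0 where \<delta>0: "0 < \<delta>0"
    and W: "\<forall>b\<in>B. \<forall>x\<in>A. dist a x < \<delta>0 \<longrightarrow> (\<forall>s. 0 < s \<and> s < \<delta>0 \<longrightarrow>
       (\<exists>w\<in>A. norm (w - x) \<le> 2 * s \<and> norm ((w - x) /\<^sub>R s - sgn b) \<le> 1 / (8 * M * K)))"
    using Tan_directions_persist_uniformly[OF a finB B(1)] by blast
  define \<delta> where "\<delta> = min (\<delta>0 / 2) (t / (160 * M * K))"
  have \<delta>: "0 < \<delta>" "2 * \<delta> \<le> \<delta>0" "2 * \<delta> \<le> t / (80 * M * K)"
    using \<delta>0 t(1) M(1) K(1) by (auto simp: \<delta>_def min_def field_simps)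
  have "infdist u (span (Tan A y)) \<le> 20 * M * K / t * dist x y"
    if x: "x \<in> A" "dist a x < \<delta>" "dim (Tan A x) = dim (Tan A a)" and y: "y \<in> A" "dist a y < \<delta>"
      and u: "u \<in> span (Tan A x)" "norm u = 1" for x y u
  proof (cases "x = y")
    case True
    then show ?thesis
      using u(1) by simp
  next
    case False
    have \<rho>: "0 < dist x y" "dist x y < 2 * \<delta>"
      using False x(2) y(2) dist_triangle[of x y a] by (auto simp: dist_commute)
    have "\<exists>w\<in>A. norm (w - x) \<le> 2 * dist x y \<and> norm ((w - x) /\<^sub>R dist x y - sgn b) \<le> 1 / (8 * M * K)"
      if "b \<in> B" for b
    proof -
      have "dist a x < \<delta>0" "dist x y < \<delta>0"
        using \<delta>(1,2) \<rho>(2) x(2) by linarith+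
      then show ?thesis
        using W that x(1) \<rho>(1) by blast
    qed
    then obtain W where W: "\<And>b. b \<in> B \<Longrightarrow> W b \<in> A \<and> norm (W b - x) \<le> 2 * dist x y
        \<and> norm ((W b - x) /\<^sub>R dist x y - sgn b) \<le> 1 / (8 * M * K)"
      by metis
    have "5 * K * dist x y / t \<le> 5 * K * (t / (80 * M * K)) / t"
      using \<rho>(2) \<delta>(3) K(1) t(1) by (intro divide_right_mono mult_left_mono) auto
    also have "\<dots> \<le> 1 / (8 * M)"
      using M(1) K(1) t(1) by (simp add: field_simps)
    finally show ?thesis
      using infdist_Tan_span_le[OF finB M(2,1) K x(1) _ y(1) False W t _ u] x(3) B(3) by simp
  qed
  then show ?thesis
    using \<delta>(1) by blast
qed

end

theorem theorem3p11:
  fixes A :: "'a::euclidean_space set" and k :: nat and a :: 'a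
  assumes "DIM('a) \<ge> 2"
    and "1 \<le> k" and "k \<le> DIM('a) - 1"
    and "positive_reach A"
    and "a \<in> T_k A k"
  shows "\<exists>\<delta>>0. \<exists>L. \<forall>x\<in>T_k A k \<inter> ball a \<delta>. \<forall>y\<in>T_k A k \<inter> ball a \<delta>.
           grass_dist (psi A x) (psi A y) \<le> L * dist x y"
proof -
  obtain e where "reach_ge A e"
    using assms(4) by (auto simp: positive_reach_def reach_ge_def)
  then interpret reach_ge A e .
  have T_k_iff: "x \<in> T_k A k \<longleftrightarrow> x \<in> A \<and> dim (Tan A x) = k" for x
    by (simp add: T_k_def Tan_span_def dim_span)
  have a: "a \<in> A" "dim (Tan A a) = k"
    using assms(5) by (simp_all add: T_k_iff)
  obtain \<delta> L where "0 < \<delta>" and lip: "\<forall>x\<in>A. \<forall>y\<in>A. dist a x < \<delta> \<longrightarrow> dist a y < \<delta> \<longrightarrow>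
      dim (Tan A x) = k \<longrightarrow> (\<forall>u\<in>span (Tan A x). norm u = 1 \<longrightarrow> infdist u (span (Tan A y)) \<le> L * dist x y)"
    using Tan_span_lipschitz_one_sided[OF a(1)] unfolding a(2) by blast
  have "grass_dist (psi A x) (psi A y) \<le> L * dist x y"
    if "x \<in> T_k A k \<inter> ball a \<delta>" "y \<in> T_k A k \<inter> ball a \<delta>" for x y
  proof -
    have x: "x \<in> A" "dim (Tan A x) = k" "dist a x < \<delta>" and y: "y \<in> A" "dim (Tan A y) = k" "dist a y < \<delta>"
      using that by (simp_all add: T_k_iff)
    show ?thesis
      unfolding psi_def Tan_span_def
    proof (rule grass_dist_le)
      show "\<exists>u\<in>span (Tan A x). norm u = 1" "\<exists>v\<in>span (Tan A y). norm v = 1"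
        using x(2) y(2) assms(2) by (simp_all add: exists_unit_in_span)
      show "infdist u (span (Tan A y)) \<le> L * dist x y" if "u \<in> span (Tan A x)" "norm u = 1" for u
        using lip x y that by blast
      show "infdist v (span (Tan A x)) \<le> L * dist x y" if "v \<in> span (Tan A y)" "norm v = 1" for v
        using lip x y that by (metis dist_commute)
    qed
  qed
  then show ?thesis
    using \<open>0 < \<delta>\<close> by blast
qed

end
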